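(* For every $i\ge1$ there exist $d\in\mathbb{N}$, $k=2$ actions, a policy $\pi(a|s)>0$, and two families $M=(M^0,M^1)$, $W=(W^0,W^1)$ of nonnegative $d\times d$ matrices with $\sum_{s'}M^a_{ss'}=\sum_{s'}W^a_{ss'}=\pi(a|s)$ for all $a,s$, such that $M^+$ and $W^+$ have the same zero pattern (and hence so do $(M^+)^j$ and $(W^+)^j$ for all $j$), and such that for every $j\in\{1,\dots,i\}$ and every action sequence $a_1,\dots,a_j$, $$M^{a_1}M^{a_2}\cdots M^{a_j}\oslash(M^+)^j=W^{a_1}W^{a_2}\cdots W^{a_j}\oslash(W^+)^j,$$ but for some action sequence $a_1,\dots,a_{i+1}$, $$M^{a_1}\cdots M^{a_{i+1}}\oslash(M^+)^{i+1}\ne W^{a_1}\cdots W^{a_{i+1}}\oslash(W^+)^{i+1}.$$ Consequently, each of the following can fail for suitable such $M$ (with $W$ ranging over families with the same policy): (i) $B^a$ determines $M$; (ii) $B^a$ and $B^{aa'}$ determine $M$; (iii) $B^a$ determines all multi-step inverse models $B^{a_1\cdots a_j}$; (iv) $B^a$ and $B^{aa'}$ determine all $B^{a_1\cdots a_j}$; (v) $B^a$ determines $B^{a+}$; (vi) $B^a$ and $B^{a+}$ determine $B^{a++}$.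
   Context: Products are ordinary matrix products, $(M^+)^j$ is the $j$-th matrix power of $M^+=\sum_aM^a$, and $\oslash$ is entrywise division, with the convention that an entry $0/0$ is "undefined" and two undefined entries count as equal (they occur at the same positions for $M$ and $W$ by the zero-pattern condition). For a family $M$, $B^{a_1\cdots a_j}:=M^{a_1}\cdots M^{a_j}\oslash(M^+)^j$ (the inverse model $p(a_1\dots a_j|s,s^j)$), $B^{a+}:=M^aM^+\oslash(M^+)^2$, $B^{a++}:=M^a(M^+)^2\oslash(M^+)^3$. "$X$ determines $Y$" for $M$ means: every family $W$ with the same policy whose $X$-quantities equal those of $M$ also has the same $Y$-quantities (for (i),(ii): $W=M$). *)

theory Defs
  imports Complex_Main
begin

text \<open>d x d real matrices are functions nat => nat => real, only indices < d matter.  A policy pol maps (a, s) to pol a s.\<close>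

definition mmult :: "nat \<Rightarrow> (nat \<Rightarrow> nat \<Rightarrow> real) \<Rightarrow> (nat \<Rightarrow> nat \<Rightarrow> real) \<Rightarrow> (nat \<Rightarrow> nat \<Rightarrow> real)" where
  "mmult d A B = (\<lambda>i j. \<Sum>l<d. A i l * B l j)"

definition mone :: "nat \<Rightarrow> nat \<Rightarrow> real" where
  "mone = (\<lambda>i j. if i = j then 1 else 0)"

fun mpow :: "nat \<Rightarrow> (nat \<Rightarrow> nat \<Rightarrow> real) \<Rightarrow> nat \<Rightarrow> (nat \<Rightarrow> nat \<Rightarrow> real)" where
  "mpow d A 0 = mone"
| "mpow d A (Suc n) = mmult d A (mpow d A n)"

definition mplus :: "nat \<Rightarrow> (nat \<Rightarrow> nat \<Rightarrow> nat \<Rightarrow> real) \<Rightarrow> (nat \<Rightarrow> nat \<Rightarrow> real)" where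
  "mplus k M = (\<lambda>i j. \<Sum>a<k. M a i j)"

definition mprod :: "nat \<Rightarrow> (nat \<Rightarrow> nat \<Rightarrow> nat \<Rightarrow> real) \<Rightarrow> nat list \<Rightarrow> (nat \<Rightarrow> nat \<Rightarrow> real)" where
  "mprod d M as = foldr (\<lambda>a P. mmult d (M a) P) as mone"

text \<open>entrywise division; an entry with zero denominator is "undefined" (None);
  two undefined entries are equal.\<close>
definition ediv :: "(nat \<Rightarrow> nat \<Rightarrow> real) \<Rightarrow> (nat \<Rightarrow> nat \<Rightarrow> real) \<Rightarrow> (nat \<Rightarrow> nat \<Rightarrow> real option)" where
  "ediv A B = (\<lambda>i j. if B i j = 0 then None else Some (A i j / B i j))"

definition meq :: "nat \<Rightarrow> (nat \<Rightarrow> nat \<Rightarrow> 'b) \<Rightarrow> (nat \<Rightarrow> nat \<Rightarrow> 'b) \<Rightarrow> bool" where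
  "meq d A B \<longleftrightarrow> (\<forall>i<d. \<forall>j<d. A i j = B i j)"

definition Binv :: "nat \<Rightarrow> nat \<Rightarrow> (nat \<Rightarrow> nat \<Rightarrow> nat \<Rightarrow> real) \<Rightarrow> nat list \<Rightarrow> (nat \<Rightarrow> nat \<Rightarrow> real option)" where
  "Binv d k M as = ediv (mprod d M as) (mpow d (mplus k M) (length as))"

definition Bplus :: "nat \<Rightarrow> nat \<Rightarrow> (nat \<Rightarrow> nat \<Rightarrow> nat \<Rightarrow> real) \<Rightarrow> nat \<Rightarrow> (nat \<Rightarrow> nat \<Rightarrow> real option)" where
  "Bplus d k M a = ediv (mmult d (M a) (mplus k M)) (mpow d (mplus k M) 2)"

definition Bplusplus :: "nat \<Rightarrow> nat \<Rightarrow> (nat \<Rightarrow> nat \<Rightarrow> nat \<Rightarrow> real) \<Rightarrow> nat \<Rightarrow> (nat \<Rightarrow> nat \<Rightarrow> real option)" where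
  "Bplusplus d k M a = ediv (mmult d (M a) (mpow d (mplus k M) 2)) (mpow d (mplus k M) 3)"

definition pos_policy :: "nat \<Rightarrow> nat \<Rightarrow> (nat \<Rightarrow> nat \<Rightarrow> real) \<Rightarrow> bool" where
  "pos_policy d k pol \<longleftrightarrow> (\<forall>a<k. \<forall>s<d. pol a s > 0)"

definition family :: "nat \<Rightarrow> nat \<Rightarrow> (nat \<Rightarrow> nat \<Rightarrow> real) \<Rightarrow> (nat \<Rightarrow> nat \<Rightarrow> nat \<Rightarrow> real) \<Rightarrow> bool" where
  "family d k pol M \<longleftrightarrow>
     (\<forall>a<k. \<forall>s<d. \<forall>s'<d. M a s s' \<ge> 0) \<and>
     (\<forall>a<k. \<forall>s<d. (\<Sum>s'<d. M a s s') = pol a s)"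

definition actseq :: "nat \<Rightarrow> nat list \<Rightarrow> bool" where
  "actseq k as \<longleftrightarrow> (\<forall>a\<in>set as. a < k)"

end

theory Submission
  imports Defs
begin

(* All counterexamples come from one chain on the states 0, ..., i + 2 with the uniform policy 1/2,
   depending on a parameter 0 < z < 1. From state 0, action 0 moves to state 1 or 2 and action 1
   moves to state 2 or to the absorbing state i + 2, weighted so that the probability of each
   action given the successor of 0 does not depend on z; every other state moves deterministically
   along 1 -> 2 -> ... -> i + 1, with i + 1 absorbing.
   An entry of M^a X ./ (M^+)^(n+1), where X has the deterministic rows of n further steps, is a
   ratio of sums over the successors of 0. For n < i the paths from 1 and from 2 end in different
   states, so each entry involves a single successor and is independent of z; for n = i both end
   in i + 1, and the entry at (0, i + 1) becomes c / (1 + z). Taking for X the product of the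
   remaining actions of a sequence, M^+, or (M^+)^2 gives all the claims. *)

lemma mmult_row_sparse:
  assumes "finite L" "L \<subseteq> {..<d}" "\<And>l. l < d \<Longrightarrow> l \<notin> L \<Longrightarrow> A s l = 0"
  shows "mmult d A B s t = (\<Sum>l\<in>L. A s l * B l t)"
  unfolding mmult_def using assms by (intro sum.mono_neutral_right) auto

lemma mprod_Cons: "mprod d M (a # as) = mmult d (M a) (mprod d M as)"
  by (simp add: mprod_def)

lemma sum_lessThan_2: "(\<Sum>a<(2::nat). f a) = f 0 + (f 1 :: real)"
  by (simp add: numeral_2_eq_2)

lemma pos_policy_half: "pos_policy d k (\<lambda>_ _. 1 / 2)"
  by (simp add: pos_policy_def)

definition branch_succ :: "nat \<Rightarrow> nat \<Rightarrow> nat" where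
  "branch_succ i s = (if s \<le> i then Suc s else s)"

definition branch_kernel :: "nat \<Rightarrow> real \<Rightarrow> nat \<Rightarrow> nat \<Rightarrow> real" where
  "branch_kernel i z s t =
     (if s = 0 then
        (if t = 1 then (1 - z) / 2 else if t = 2 then z else if t = i + 2 then (1 - z) / 2 else 0)
      else if t = branch_succ i s then 1 else 0)"

definition branch_family :: "nat \<Rightarrow> real \<Rightarrow> nat \<Rightarrow> nat \<Rightarrow> nat \<Rightarrow> real" where
  "branch_family i z a s t =
     (if s = 0 then
        (if t = 1 then (if a = 0 then (1 - z) / 2 else 0)
         else if t = 2 then z / 2
         else if t = i + 2 then (if a = 0 then 0 else (1 - z) / 2) else 0)
      else if t = branch_succ i s then 1 / 2 else 0)"

lemma mplus_branch_family: "mplus 2 (branch_family i z) = branch_kernel i z"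
proof (intro ext)
  fix s t
  show "mplus 2 (branch_family i z) s t = branch_kernel i z s t"
    unfolding mplus_def sum_lessThan_2 branch_family_def branch_kernel_def
    by (cases "s = 0") (auto simp: field_simps)
qed

lemma branch_succ_pos: "0 < s \<Longrightarrow> 0 < branch_succ i s"
  by (simp add: branch_succ_def)

lemma branch_succ_less: "s < i + 3 \<Longrightarrow> branch_succ i s < i + 3"
  by (simp add: branch_succ_def)

lemma funpow_branch_succ: "l \<le> i + 1 \<Longrightarrow> (branch_succ i ^^ n) l = min (l + n) (i + 1)"
  by (induction n) (auto simp: branch_succ_def)

lemma funpow_branch_succ_fixed: "i < s \<Longrightarrow> (branch_succ i ^^ n) s = s"
  by (induction n) (auto simp: branch_succ_def)

lemma mmult_branch_family_row0:
  assumes "1 \<le> i"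
  shows "mmult (i + 3) (branch_family i z a) B 0 t =
    (if a = 0 then (1 - z) / 2 * B 1 t else 0) + z / 2 * B 2 t
    + (if a = 0 then 0 else (1 - z) / 2 * B (i + 2) t)"
  using assms by (subst mmult_row_sparse[where L = "{1, 2, i + 2}"]) (auto simp: branch_family_def)

lemma mmult_branch_kernel_row0:
  assumes "1 \<le> i"
  shows "mmult (i + 3) (branch_kernel i z) B 0 t =
    (1 - z) / 2 * B 1 t + z * B 2 t + (1 - z) / 2 * B (i + 2) t"
  using assms by (subst mmult_row_sparse[where L = "{1, 2, i + 2}"]) (auto simp: branch_kernel_def)

lemma mmult_branch_family_row:
  assumes "0 < s" "s < i + 3"
  shows "mmult (i + 3) (branch_family i z a) B s t = B (branch_succ i s) t / 2"
  using assms by (subst mmult_row_sparse[where L = "{branch_succ i s}"])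
    (auto simp: branch_family_def branch_succ_less)

lemma mmult_branch_kernel_row:
  assumes "0 < s" "s < i + 3"
  shows "mmult (i + 3) (branch_kernel i z) B s t = B (branch_succ i s) t"
  using assms by (subst mmult_row_sparse[where L = "{branch_succ i s}"])
    (auto simp: branch_kernel_def branch_succ_less)

lemma mpow_branch_kernel:
  assumes "0 < l" "l < i + 3"
  shows "mpow (i + 3) (branch_kernel i z) n l t = (if t = (branch_succ i ^^ n) l then 1 else 0)"
  using assms
proof (induction n arbitrary: l)
  case 0
  then show ?case by (simp add: mone_def)
next
  case (Suc n)
  then show ?case
    by (simp add: mmult_branch_kernel_row branch_succ_pos branch_succ_less funpow_swap1)
qed

lemma mprod_branch_family:
  assumes "0 < l" "l < i + 3"
  shows "mprod (i + 3) (branch_family i z) as l t =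
    (1 / 2) ^ length as * (if t = (branch_succ i ^^ length as) l then 1 else 0)"
  using assms
proof (induction as arbitrary: l)
  case Nil
  then show ?case by (simp add: mprod_def mone_def)
next
  case (Cons a as)
  then show ?case
    by (simp add: mprod_Cons mmult_branch_family_row branch_succ_pos branch_succ_less funpow_swap1)
qed

(* The quotient M^a X ./ (M^+)^(n+1) while the branches from 1 and 2 are still apart,
   for X with rows c * e_(succ^n l) *)
definition branch_ratio :: "nat \<Rightarrow> nat \<Rightarrow> real \<Rightarrow> nat \<Rightarrow> nat \<Rightarrow> nat \<Rightarrow> real option" where
  "branch_ratio i n c a s t =
    (if s = 0 then
       (if t = n + 1 then Some (if a = 0 then c else 0)
        else if t = n + 2 then Some (c / 2)
        else if t = i + 2 then Some (if a = 0 then 0 else c) else None)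
     else if t = (branch_succ i ^^ Suc n) s then Some (c / 2) else None)"

lemma branch_quotient_unmerged:
  assumes "1 \<le> i" "0 < z" "z < 1" "n < i" "s < i + 3"
    and B: "\<And>l t. 0 < l \<Longrightarrow> l < i + 3 \<Longrightarrow>
      B l t = c * (if t = (branch_succ i ^^ n) l then 1 else 0)"
  shows "ediv (mmult (i + 3) (branch_family i z a) B) (mpow (i + 3) (branch_kernel i z) (Suc n)) s t =
    branch_ratio i n c a s t"
proof (cases "s = 0")
  case True
  have ends: "(branch_succ i ^^ n) 1 = n + 1" "(branch_succ i ^^ n) 2 = n + 2"
    "(branch_succ i ^^ n) (i + 2) = i + 2"
    using \<open>n < i\<close> by (simp_all add: funpow_branch_succ funpow_branch_succ_fixed)
  have num: "mmult (i + 3) (branch_family i z a) B 0 t =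
      (if a = 0 then (1 - z) / 2 * c * (if t = n + 1 then 1 else 0) else 0)
      + z / 2 * c * (if t = n + 2 then 1 else 0)
      + (if a = 0 then 0 else (1 - z) / 2 * c * (if t = i + 2 then 1 else 0))"
    using assms ends by (simp add: mmult_branch_family_row0 B)
  have den: "mpow (i + 3) (branch_kernel i z) (Suc n) 0 t =
      (1 - z) / 2 * (if t = n + 1 then 1 else 0) + z * (if t = n + 2 then 1 else 0)
      + (1 - z) / 2 * (if t = i + 2 then 1 else 0)"
    using assms ends by (simp add: mmult_branch_kernel_row0 mpow_branch_kernel)
  have "t = n + 1 \<or> t = n + 2 \<or> t = i + 2 \<or> (t \<noteq> n + 1 \<and> t \<noteq> n + 2 \<and> t \<noteq> i + 2)"
    by blast
  then show ?thesis
    unfolding True ediv_def branch_ratio_def num den using assms by (elim disjE) auto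
qed (use assms in \<open>simp add: ediv_def branch_ratio_def mmult_branch_family_row mmult_branch_kernel_row
        mpow_branch_kernel B branch_succ_pos branch_succ_less funpow_swap1\<close>)

lemma branch_quotient_merged:
  assumes "1 \<le> i" "0 < z" "z < 1"
    and B: "\<And>l t. 0 < l \<Longrightarrow> l < i + 3 \<Longrightarrow>
      B l t = c * (if t = (branch_succ i ^^ i) l then 1 else 0)"
  shows "ediv (mmult (i + 3) (branch_family i z 0) B) (mpow (i + 3) (branch_kernel i z) (Suc i))
    0 (i + 1) = Some (c / (1 + z))"
proof -
  have ends: "(branch_succ i ^^ i) 1 = i + 1" "(branch_succ i ^^ i) 2 = i + 1"
    "(branch_succ i ^^ i) (i + 2) = i + 2"
    using \<open>1 \<le> i\<close> by (simp_all add: funpow_branch_succ funpow_branch_succ_fixed)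
  show ?thesis
    using assms ends
    by (simp add: ediv_def mmult_branch_family_row0 mmult_branch_kernel_row0 mpow_branch_kernel B
        field_simps)
qed

lemma Binv_branch_family_Cons:
  "Binv (i + 3) 2 (branch_family i z) (a # as) =
    ediv (mmult (i + 3) (branch_family i z a) (mprod (i + 3) (branch_family i z) as))
      (mpow (i + 3) (branch_kernel i z) (Suc (length as)))"
  by (simp add: Binv_def mprod_Cons mplus_branch_family del: mpow.simps)

lemma Bplus_branch_family:
  "Bplus (i + 3) 2 (branch_family i z) a =
    ediv (mmult (i + 3) (branch_family i z a) (branch_kernel i z))
      (mpow (i + 3) (branch_kernel i z) (Suc 1))"
  unfolding Bplus_def mplus_branch_family by (simp only: Suc_1)

lemma Bplusplus_branch_family:
  "Bplusplus (i + 3) 2 (branch_family i z) a =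
    ediv (mmult (i + 3) (branch_family i z a) (mpow (i + 3) (branch_kernel i z) 2))
      (mpow (i + 3) (branch_kernel i z) (Suc 2))"
  unfolding Bplusplus_def mplus_branch_family by (simp only: numeral_2_eq_2 numeral_3_eq_3)

lemma Binv_branch_family_agree:
  assumes "1 \<le> i" "0 < z" "z < 1" "0 < z'" "z' < 1" "1 \<le> length as" "length as \<le> i"
  shows "meq (i + 3) (Binv (i + 3) 2 (branch_family i z) as)
    (Binv (i + 3) 2 (branch_family i z') as)"
proof -
  obtain a bs where as: "as = a # bs"
    using \<open>1 \<le> length as\<close> by (cases as) auto
  have "Binv (i + 3) 2 (branch_family i z) as s t =
      branch_ratio i (length bs) ((1 / 2) ^ length bs) a s t"
    if "0 < z" "z < 1" "s < i + 3" for z s t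
    unfolding as Binv_branch_family_Cons
    by (rule branch_quotient_unmerged) (use assms as that mprod_branch_family in auto)
  then show ?thesis
    using assms by (simp add: meq_def)
qed

lemma Binv_branch_family_differ:
  assumes "1 \<le> i" "0 < z" "z < 1" "0 < z'" "z' < 1" "z \<noteq> z'"
  shows "\<not> meq (i + 3) (Binv (i + 3) 2 (branch_family i z) (replicate (Suc i) 0))
    (Binv (i + 3) 2 (branch_family i z') (replicate (Suc i) 0))"
proof -
  have "Binv (i + 3) 2 (branch_family i z) (replicate (Suc i) 0) 0 (i + 1) =
      Some ((1 / 2) ^ i / (1 + z))"
    if "0 < z" "z < 1" for z
    unfolding replicate_Suc Binv_branch_family_Cons length_replicate
    by (rule branch_quotient_merged)
      (use assms that mprod_branch_family[of _ i z "replicate i 0"] in auto)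
  then have "Binv (i + 3) 2 (branch_family i z) (replicate (Suc i) 0) 0 (i + 1) \<noteq>
      Binv (i + 3) 2 (branch_family i z') (replicate (Suc i) 0) 0 (i + 1)"
    using assms by simp
  then show ?thesis
    unfolding meq_def by force
qed

lemma Bplus_branch_family_agree:
  assumes "2 \<le> i" "0 < z" "z < 1" "0 < z'" "z' < 1"
  shows "meq (i + 3) (Bplus (i + 3) 2 (branch_family i z) a)
    (Bplus (i + 3) 2 (branch_family i z') a)"
proof -
  have "Bplus (i + 3) 2 (branch_family i z) a s t = branch_ratio i 1 1 a s t"
    if "0 < z" "z < 1" "s < i + 3" for z s t
    unfolding Bplus_branch_family
    by (rule branch_quotient_unmerged) (use assms that in \<open>auto simp: branch_kernel_def\<close>)
  then show ?thesis
    using assms by (simp add: meq_def)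
qed

lemma Bplus_branch_family_differ:
  assumes "0 < z" "z < 1" "0 < z'" "z' < 1" "z \<noteq> z'"
  shows "\<not> meq (1 + 3) (Bplus (1 + 3) 2 (branch_family 1 z) 0)
    (Bplus (1 + 3) 2 (branch_family 1 z') 0)"
proof -
  have "Bplus (1 + 3) 2 (branch_family 1 z) 0 0 (1 + 1) = Some (1 / (1 + z))"
    if "0 < z" "z < 1" for z
    unfolding Bplus_branch_family
    by (rule branch_quotient_merged) (use that in \<open>auto simp: branch_kernel_def\<close>)
  then have "Bplus (1 + 3) 2 (branch_family 1 z) 0 0 (1 + 1) \<noteq>
      Bplus (1 + 3) 2 (branch_family 1 z') 0 0 (1 + 1)"
    using assms by simp
  then show ?thesis
    unfolding meq_def by force
qed

lemma Bplusplus_branch_family_differ: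
  assumes "0 < z" "z < 1" "0 < z'" "z' < 1" "z \<noteq> z'"
  shows "\<not> meq (2 + 3) (Bplusplus (2 + 3) 2 (branch_family 2 z) 0)
    (Bplusplus (2 + 3) 2 (branch_family 2 z') 0)"
proof -
  have "Bplusplus (2 + 3) 2 (branch_family 2 z) 0 0 (2 + 1) = Some (1 / (1 + z))"
    if "0 < z" "z < 1" for z
    unfolding Bplusplus_branch_family
    by (rule branch_quotient_merged) (use that mpow_branch_kernel[of _ 2 z 2] in auto)
  then have "Bplusplus (2 + 3) 2 (branch_family 2 z) 0 0 (2 + 1) \<noteq>
      Bplusplus (2 + 3) 2 (branch_family 2 z') 0 0 (2 + 1)"
    using assms by simp
  then show ?thesis
    unfolding meq_def by force
qed

lemma family_branch_family:
  assumes "1 \<le> i" "0 \<le> z" "z \<le> 1"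
  shows "family (i + 3) 2 (\<lambda>_ _. 1 / 2) (branch_family i z)"
proof -
  have "(\<Sum>t<i + 3. branch_family i z a s t) = 1 / 2" if "s < i + 3" for a s
  proof -
    have "(\<Sum>t<i + 3. branch_family i z a s t) = mmult (i + 3) (branch_family i z a) (\<lambda>_ _. 1) s 0"
      by (simp add: mmult_def)
    also have "\<dots> = 1 / 2"
      using assms that by (cases "s = 0")
        (simp_all add: mmult_branch_family_row0 mmult_branch_family_row field_simps)
    finally show ?thesis .
  qed
  then show ?thesis
    using assms by (auto simp: family_def branch_family_def)
qed

lemma branch_family_zero_pattern:
  assumes "0 < z" "z < 1" "0 < z'" "z' < 1"
  shows "mplus 2 (branch_family i z) s t = 0 \<longleftrightarrow> mplus 2 (branch_family i z') s t = 0"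
  using assms by (simp add: mplus_branch_family branch_kernel_def)

lemma branch_family_ne:
  assumes "z \<noteq> z'"
  shows "\<not> (\<forall>a<2. meq (i + 3) (branch_family i z a) (branch_family i z' a))"
proof -
  have "branch_family i z 0 0 1 \<noteq> branch_family i z' 0 0 1"
    using assms by (simp add: branch_family_def)
  then show ?thesis
    unfolding meq_def by force
qed

theorem proposition4:
  shows
  "(\<forall>i::nat. i \<ge> 1 \<longrightarrow>
     (\<exists>d pol M W. pos_policy d 2 pol \<and> family d 2 pol M \<and> family d 2 pol W \<and>
        (\<forall>s<d. \<forall>s'<d. (mplus 2 M s s' = 0 \<longleftrightarrow> mplus 2 W s s' = 0)) \<and>
        (\<forall>as. actseq 2 as \<and> 1 \<le> length as \<and> length as \<le> i \<longrightarrow>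
              meq d (Binv d 2 M as) (Binv d 2 W as)) \<and>
        (\<exists>as. actseq 2 as \<and> length as = i + 1 \<and>
              \<not> meq d (Binv d 2 M as) (Binv d 2 W as))))
   \<and>
   \<comment> \<open>(i) B^a does not determine M\<close>
   (\<exists>d pol M W. pos_policy d 2 pol \<and> family d 2 pol M \<and> family d 2 pol W \<and>
      (\<forall>a<2. meq d (Binv d 2 M [a]) (Binv d 2 W [a])) \<and>
      \<not> (\<forall>a<2. meq d (M a) (W a)))
   \<and>
   \<comment> \<open>(ii) B^a and B^{aa'} do not determine M\<close>
   (\<exists>d pol M W. pos_policy d 2 pol \<and> family d 2 pol M \<and> family d 2 pol W \<and>
      (\<forall>a<2. meq d (Binv d 2 M [a]) (Binv d 2 W [a])) \<and>
      (\<forall>a<2. \<forall>a'<2. meq d (Binv d 2 M [a, a']) (Binv d 2 W [a, a'])) \<and>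
      \<not> (\<forall>a<2. meq d (M a) (W a)))
   \<and>
   \<comment> \<open>(iii) B^a does not determine all B^{a_1...a_j}\<close>
   (\<exists>d pol M W. pos_policy d 2 pol \<and> family d 2 pol M \<and> family d 2 pol W \<and>
      (\<forall>a<2. meq d (Binv d 2 M [a]) (Binv d 2 W [a])) \<and>
      (\<exists>as. actseq 2 as \<and> \<not> meq d (Binv d 2 M as) (Binv d 2 W as)))
   \<and>
   \<comment> \<open>(iv) B^a and B^{aa'} do not determine all B^{a_1...a_j}\<close>
   (\<exists>d pol M W. pos_policy d 2 pol \<and> family d 2 pol M \<and> family d 2 pol W \<and>
      (\<forall>a<2. meq d (Binv d 2 M [a]) (Binv d 2 W [a])) \<and>
      (\<forall>a<2. \<forall>a'<2. meq d (Binv d 2 M [a, a']) (Binv d 2 W [a, a'])) \<and>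
      (\<exists>as. actseq 2 as \<and> \<not> meq d (Binv d 2 M as) (Binv d 2 W as)))
   \<and>
   \<comment> \<open>(v) B^a does not determine B^{a+}\<close>
   (\<exists>d pol M W. pos_policy d 2 pol \<and> family d 2 pol M \<and> family d 2 pol W \<and>
      (\<forall>a<2. meq d (Binv d 2 M [a]) (Binv d 2 W [a])) \<and>
      \<not> (\<forall>a<2. meq d (Bplus d 2 M a) (Bplus d 2 W a)))
   \<and>
   \<comment> \<open>(vi) B^a and B^{a+} do not determine B^{a++}\<close>
   (\<exists>d pol M W. pos_policy d 2 pol \<and> family d 2 pol M \<and> family d 2 pol W \<and>
      (\<forall>a<2. meq d (Binv d 2 M [a]) (Binv d 2 W [a])) \<and>
      (\<forall>a<2. meq d (Bplus d 2 M a) (Bplus d 2 W a)) \<and>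
      \<not> (\<forall>a<2. meq d (Bplusplus d 2 M a) (Bplusplus d 2 W a)))"
proof -
  let ?pol = "\<lambda>_ _. 1 / 2 :: real"
  let ?M = "\<lambda>i. branch_family i (1 / 2)" and ?W = "\<lambda>i. branch_family i (1 / 3)"
  have witness: "\<exists>d pol M W. P d pol M W" if "P (i + 3) ?pol (?M i) (?W i)" for P i
    using that by blast
  have families:
    "pos_policy (i + 3) 2 ?pol \<and> family (i + 3) 2 ?pol (?M i) \<and> family (i + 3) 2 ?pol (?W i)"
    if "1 \<le> i" for i
    using that by (simp add: pos_policy_half family_branch_family)
  have agree: "meq (i + 3) (Binv (i + 3) 2 (?M i) as) (Binv (i + 3) 2 (?W i) as)"
    if "1 \<le> i" "1 \<le> length as" "length as \<le> i" for i as
    using that by (intro Binv_branch_family_agree) auto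
  have differ: "\<exists>as. actseq 2 as \<and> length as = i + 1 \<and>
      \<not> meq (i + 3) (Binv (i + 3) 2 (?M i) as) (Binv (i + 3) 2 (?W i) as)"
    if "1 \<le> i" for i
    using that Binv_branch_family_differ[of i "1 / 2" "1 / 3"]
    by (intro exI[of _ "replicate (Suc i) 0"]) (auto simp: actseq_def)
  note zero_pattern = branch_family_zero_pattern[of "1 / 2" "1 / 3"]
    and ne = branch_family_ne[of "1 / 2" "1 / 3"]
  show ?thesis
    apply (intro conjI allI impI)
    subgoal for i by (rule witness[of _ i]) (use families agree differ zero_pattern in auto)
    subgoal by (rule witness[of _ 1]) (use families[of 1] agree[of 1] ne[of 1] in auto)
    subgoal by (rule witness[of _ 2]) (use families[of 2] agree[of 2] ne[of 2] in auto)
    subgoal by (rule witness[of _ 1]) (use families[of 1] agree[of 1] differ[of 1] in auto)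
    subgoal by (rule witness[of _ 2]) (use families[of 2] agree[of 2] differ[of 2] in auto)
    subgoal by (rule witness[of _ 1])
        (use families[of 1] agree[of 1] Bplus_branch_family_differ[of "1 / 2" "1 / 3"] in force)
    subgoal by (rule witness[of _ 2])
        (use families[of 2] agree[of 2] Bplus_branch_family_agree[of 2 "1 / 2" "1 / 3"]
          Bplusplus_branch_family_differ[of "1 / 2" "1 / 3"] in force)
    done
qed

end
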